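(* Let $\lambda\in\mathbb{R}$. For every $\mu,\nu\in{\mathcal M}({\mathcal T})$, $\mathrm{ET}_{c,\lambda}(\mu,\nu)=\mathrm{KT}(\hat\mu,\hat\nu)$. Moreover, the relation $$\hat\gamma=\gamma+[(1-f_1)\mu]\otimes\delta_{\hat s}+\delta_{\hat s}\otimes[(1-f_2)\nu]+\gamma({\mathcal T}\times{\mathcal T})\,\delta_{(\hat s,\hat s)}$$ (where $\gamma_1=f_1\mu$, $\gamma_2=f_2\nu$) gives a one-to-one correspondence between optimal solutions $\gamma$ of the problem defining $\mathrm{ET}_{c,\lambda}(\mu,\nu)$ and optimal solutions $\hat\gamma$ of the problem defining $\mathrm{KT}(\hat\mu,\hat\nu)$.
   Context: Let ${\mathcal T}$ be a tree (identified with the set of its nodes and all points on its edges), ${\mathcal M}({\mathcal T})$ the set of nonnegative Borel measures on ${\mathcal T}$ with finite mass. Fix $b\ge0$, a continuous cost $c:{\mathcal T}\times{\mathcal T}\to\mathbb{R}$ with $c(x,x)=0$, and weights $w_1,w_2:{\mathcal T}\to[0,\infty)$. For $\mu,\nu\in{\mathcal M}({\mathcal T})$, $\Pi_{\le}(\mu,\nu)$ is the set of nonnegative finite Borel measures $\gamma$ on ${\mathcal T}\times{\mathcal T}$ with marginals $\gamma_1\le\mu$, $\gamma_2\le\nu$, and $f_1,f_2$ denote the densities $\gamma_1=f_1\mu$, $\gamma_2=f_2\nu$. Define $\mathrm{ET}_{c,\lambda}(\mu,\nu):=\inf_{\gamma\in\Pi_\le(\mu,\nu)}\Big[\int_{\mathcal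 T} w_1[1-f_1]\,d\mu+\int_{\mathcal T} w_2[1-f_2]\,d\nu+b\int_{{\mathcal T}\times{\mathcal T}}[c(x,y)-\lambda]\,\gamma(dx,dy)\Big]$. Let $\hat s\notin{\mathcal T}$, $\hat{\mathcal T}:={\mathcal T}\cup\{\hat s\}$, $\hat\mu:=\mu+\nu({\mathcal T})\delta_{\hat s}$, $\hat\nu:=\nu+\mu({\mathcal T})\delta_{\hat s}$, and define $\hat c$ on $\hat{\mathcal T}\times\hat{\mathcal T}$ by $\hat c(x,y)=b[c(x,y)-\lambda]$ for $x,y\in{\mathcal T}$, $\hat c(x,\hat s)=w_1(x)$ for $x\in{\mathcal T}$, $\hat c(\hat s,y)=w_2(y)$ for $y\in{\mathcal T}$, $\hat c(\hat s,\hat s)=0$. Let $\Gamma(\hat\mu,\hat\nu)$ be the set of nonnegative Borel measures on $\hat{\mathcal T}\times\hat{\mathcal T}$ with marginals $\hat\mu$ and $\hat\nu$, and $\mathrm{KT}(\hat\mu,\hat\nu):=\inf_{\hat\gamma\in\Gamma(\hat\mu,\hat\nu)}\int_{\hat{\mathcal T}\times\hat{\mathcal T}}\hat c\,d\hat\gamma$. *)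

theory Defs
  imports "HOL-Analysis.Analysis" "HOL-Probability.Probability"
begin

text \<open>A (metric) tree: a compact, path-connected set in which any two arcs with the
  same endpoints have the same image (uniquely arcwise connected continuum).
  Every finite metric tree (nodes plus the points on its edges) is of this kind.\<close>
definition is_tree :: "'a::metric_space set \<Rightarrow> bool" where
  "is_tree T \<longleftrightarrow> compact T \<and> path_connected T \<and>
     (\<forall>g h. arc g \<and> arc h \<and> path_image g \<subseteq> T \<and> path_image h \<subseteq> T \<and>
        pathstart g = pathstart h \<and> pathfinish g = pathfinish h \<longrightarrow> path_image g = path_image h)"

definition fin_measures :: "'a::topological_space set \<Rightarrow> 'a measure set" where
  "fin_measures T = {\<mu>. sets \<mu> = sets (restrict_space borel T) \<and> finite_measure \<mu>}"

definition ext_integral :: "'a measure \<Rightarrow> ('a \<Rightarrow> real) \<Rightarrow> ereal" where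
  "ext_integral M f = enn2ereal (\<integral>\<^sup>+ z. ennreal (f z) \<partial>M) - enn2ereal (\<integral>\<^sup>+ z. ennreal (- f z) \<partial>M)"

definition marg1 :: "'a::topological_space set \<Rightarrow> ('a \<times> 'a) measure \<Rightarrow> 'a measure" where
  "marg1 T \<gamma> = distr \<gamma> (restrict_space borel T) fst"
definition marg2 :: "'a::topological_space set \<Rightarrow> ('a \<times> 'a) measure \<Rightarrow> 'a measure" where
  "marg2 T \<gamma> = distr \<gamma> (restrict_space borel T) snd"

definition sub_plans :: "'a::topological_space set \<Rightarrow> 'a measure \<Rightarrow> 'a measure \<Rightarrow> ('a \<times> 'a) measure set" where
  "sub_plans T \<mu> \<nu> = {\<gamma>. sets \<gamma> = sets (restrict_space borel (T \<times> T)) \<and> finite_measure \<gamma> \<and>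
      (\<forall>A\<in>sets (restrict_space borel T). emeasure (marg1 T \<gamma>) A \<le> emeasure \<mu> A) \<and>
      (\<forall>A\<in>sets (restrict_space borel T). emeasure (marg2 T \<gamma>) A \<le> emeasure \<nu> A)}"

text \<open>Objective of the extended (unbalanced) transport problem; the densities
  \<open>f\<^sub>1, f\<^sub>2\<close> of \<open>\<gamma>\<^sub>1 \<le> \<mu>, \<gamma>\<^sub>2 \<le> \<nu>\<close> are the Radon-Nikodym derivatives.\<close>
definition ET_cost :: "real \<Rightarrow> ('a \<Rightarrow> 'a \<Rightarrow> real) \<Rightarrow> real \<Rightarrow> ('a \<Rightarrow> real) \<Rightarrow> ('a \<Rightarrow> real) \<Rightarrow>
    'a::topological_space set \<Rightarrow> 'a measure \<Rightarrow> 'a measure \<Rightarrow> ('a \<times> 'a) measure \<Rightarrow> ereal" where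
  "ET_cost b c lam w1 w2 T \<mu> \<nu> \<gamma> =
     enn2ereal (\<integral>\<^sup>+ x. ennreal (w1 x) * (1 - RN_deriv \<mu> (marg1 T \<gamma>) x) \<partial>\<mu>)
   + enn2ereal (\<integral>\<^sup>+ y. ennreal (w2 y) * (1 - RN_deriv \<nu> (marg2 T \<gamma>) y) \<partial>\<nu>)
   + ereal b * ext_integral \<gamma> (\<lambda>z. c (fst z) (snd z) - lam)"

definition ET :: "real \<Rightarrow> ('a \<Rightarrow> 'a \<Rightarrow> real) \<Rightarrow> real \<Rightarrow> ('a \<Rightarrow> real) \<Rightarrow> ('a \<Rightarrow> real) \<Rightarrow>
    'a::topological_space set \<Rightarrow> 'a measure \<Rightarrow> 'a measure \<Rightarrow> ereal" where
  "ET b c lam w1 w2 T \<mu> \<nu> = (INF \<gamma>\<in>sub_plans T \<mu> \<nu>. ET_cost b c lam w1 w2 T \<mu> \<nu> \<gamma>)"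

text \<open>The extended space \<open>T\<^sup>^ = T \<union> {s}\<close> (with \<open>s \<notin> T\<close>, a point of the ambient type), and
  the extended measures \<open>\<mu>\<^sup>^ = \<mu> + \<nu>(T) \<delta>\<^sub>s\<close>, \<open>\<nu>\<^sup>^ = \<nu> + \<mu>(T) \<delta>\<^sub>s\<close>.\<close>
definition hat_meas :: "'a::topological_space set \<Rightarrow> 'a \<Rightarrow> 'a measure \<Rightarrow> 'a measure \<Rightarrow> 'a measure" where
  "hat_meas T s \<mu> \<nu> = measure_of (insert s T) (sets (restrict_space borel (insert s T)))
     (\<lambda>A. emeasure \<mu> (A \<inter> T) + emeasure \<nu> T * indicator A s)"

definition hat_c :: "real \<Rightarrow> ('a \<Rightarrow> 'a \<Rightarrow> real) \<Rightarrow> real \<Rightarrow> ('a \<Rightarrow> real) \<Rightarrow> ('a \<Rightarrow> real) \<Rightarrow> 'a \<Rightarrow> 'a \<Rightarrow> 'a \<Rightarrow> real" where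
  "hat_c b c lam w1 w2 s x y =
     (if x = s \<and> y = s then 0 else if y = s then w1 x else if x = s then w2 y else b * (c x y - lam))"

definition couplings :: "'a::topological_space set \<Rightarrow> 'a measure \<Rightarrow> 'a measure \<Rightarrow> ('a \<times> 'a) measure set" where
  "couplings S m n = {g. sets g = sets (restrict_space borel (S \<times> S)) \<and>
      distr g (restrict_space borel S) fst = m \<and> distr g (restrict_space borel S) snd = n}"

definition KT_cost :: "real \<Rightarrow> ('a \<Rightarrow> 'a \<Rightarrow> real) \<Rightarrow> real \<Rightarrow> ('a \<Rightarrow> real) \<Rightarrow> ('a \<Rightarrow> real) \<Rightarrow> 'a \<Rightarrow>
    ('a \<times> 'a) measure \<Rightarrow> ereal" where
  "KT_cost b c lam w1 w2 s g = ext_integral g (\<lambda>z. hat_c b c lam w1 w2 s (fst z) (snd z))"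

definition KT :: "real \<Rightarrow> ('a \<Rightarrow> 'a \<Rightarrow> real) \<Rightarrow> real \<Rightarrow> ('a \<Rightarrow> real) \<Rightarrow> ('a \<Rightarrow> real) \<Rightarrow>
    'a::topological_space set \<Rightarrow> 'a \<Rightarrow> 'a measure \<Rightarrow> 'a measure \<Rightarrow> ereal" where
  "KT b c lam w1 w2 T s \<mu> \<nu> = (INF g\<in>couplings (insert s T) (hat_meas T s \<mu> \<nu>) (hat_meas T s \<nu> \<mu>).
      KT_cost b c lam w1 w2 s g)"

definition ET_optimal where
  "ET_optimal b c lam w1 w2 T \<mu> \<nu> =
     {\<gamma>\<in>sub_plans T \<mu> \<nu>. ET_cost b c lam w1 w2 T \<mu> \<nu> \<gamma> = ET b c lam w1 w2 T \<mu> \<nu>}"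

definition KT_optimal where
  "KT_optimal b c lam w1 w2 T s \<mu> \<nu> =
     {g\<in>couplings (insert s T) (hat_meas T s \<mu> \<nu>) (hat_meas T s \<nu> \<mu>).
        KT_cost b c lam w1 w2 s g = KT b c lam w1 w2 T s \<mu> \<nu>}"

text \<open>The map \<open>\<gamma> \<mapsto> \<gamma> + [(1-f\<^sub>1)\<mu>]\<otimes>\<delta>\<^sub>s + \<delta>\<^sub>s\<otimes>[(1-f\<^sub>2)\<nu>] + \<gamma>(T\<times>T) \<delta>\<^sub>(\<^sub>s\<^sub>,\<^sub>s\<^sub>)\<close>.\<close>
definition hat_plan :: "'a::topological_space set \<Rightarrow> 'a \<Rightarrow> 'a measure \<Rightarrow> 'a measure \<Rightarrow>
    ('a \<times> 'a) measure \<Rightarrow> ('a \<times> 'a) measure" where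
  "hat_plan T s \<mu> \<nu> \<gamma> = measure_of (insert s T \<times> insert s T)
     (sets (restrict_space borel (insert s T \<times> insert s T)))
     (\<lambda>A. emeasure \<gamma> (A \<inter> (T \<times> T))
        + (\<integral>\<^sup>+ x. (1 - RN_deriv \<mu> (marg1 T \<gamma>) x) * indicator A (x, s) \<partial>\<mu>)
        + (\<integral>\<^sup>+ y. (1 - RN_deriv \<nu> (marg2 T \<gamma>) y) * indicator A (s, y) \<partial>\<nu>)
        + emeasure \<gamma> (T \<times> T) * indicator A (s, s))"

end

theory Submission
  imports Defs
begin

(* The map \<gamma> \<mapsto> \<gamma>^ sends the unmatched parts (1 - f\<^sub>1)\<mu> and
   (1 - f\<^sub>2)\<nu> of a sub-plan to the column T \<times> {s} and the row {s} \<times> T, and puts the mass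
   \<gamma>(T \<times> T) at the corner (s, s); this is exactly what makes the marginals of \<gamma>^ equal to
   \<mu>^ and \<nu>^. Conversely, the marginal constraints force the masses of the column, the row and
   the corner of a coupling of \<mu>^ and \<nu>^ once its part on T \<times> T is known, so a coupling is
   the image of its restriction to T \<times> T. Hence \<gamma> \<mapsto> \<gamma>^ is a bijection between the two
   feasible sets, and it preserves cost because the extended cost equals w\<^sub>1 on the column,
   w\<^sub>2 on the row and 0 at the corner. A cost-preserving bijection carries infimum to infimum
   and minimisers to minimisers. *)

lemma AE_le_one_if_set_nn_integral_le:
  fixes f :: "'a \<Rightarrow> ennreal"
  assumes [measurable]: "f \<in> borel_measurable M" and fin: "emeasure M (space M) \<noteq> \<infinity>"
    and le: "\<And>A. A \<in> sets M \<Longrightarrow> (\<integral>\<^sup>+x. f x * indicator A x \<partial>M) \<le> emeasure M A"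
  shows "AE x in M. f x \<le> 1"
proof -
  let ?N = "{x\<in>space M. 1 < f x}"
  have N[measurable]: "?N \<in> sets M" by measurable
  have finN: "emeasure M ?N \<noteq> \<infinity>"
    using fin emeasure_mono[OF sets.sets_into_space[OF N] sets.top] by (auto simp: top_unique)
  have "(\<integral>\<^sup>+x. (f x - 1) * indicator ?N x \<partial>M) = (\<integral>\<^sup>+x. f x * indicator ?N x - indicator ?N x \<partial>M)"
    by (auto intro!: nn_integral_cong simp: indicator_def)
  also have "\<dots> = (\<integral>\<^sup>+x. f x * indicator ?N x \<partial>M) - emeasure M ?N"
    using finN by (subst nn_integral_diff) (auto split: split_indicator)
  also have "\<dots> = 0"
    using le[OF N] finN by (intro diff_eq_0_ennreal) (auto simp: less_top[symmetric] top_unique)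
  finally have "AE x in M. (f x - 1) * indicator ?N x = 0"
    by (subst (asm) nn_integral_0_iff_AE) auto
  with AE_space show ?thesis
    by eventually_elim (auto simp: indicator_def not_less ennreal_minus_eq_0 split: if_splits)
qed

lemma
  assumes "finite_measure M" and sets_eq: "sets N = sets M"
    and le: "\<And>A. A \<in> sets M \<Longrightarrow> emeasure N A \<le> emeasure M A"
  shows density_RN_deriv_of_le: "density M (RN_deriv M N) = N"
    and AE_RN_deriv_le_one_of_le: "AE x in M. RN_deriv M N x \<le> 1"
proof -
  interpret finite_measure M by fact
  have "absolutely_continuous M N"
    unfolding absolutely_continuous_def
  proof
    fix A assume "A \<in> null_sets M"
    then show "A \<in> null_sets N"
      using le[of A] sets_eq by (auto simp: null_sets_def)
  qed
  then show density: "density M (RN_deriv M N) = N"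
    using sets_eq by (rule density_RN_deriv)
  show "AE x in M. RN_deriv M N x \<le> 1"
  proof (rule AE_le_one_if_set_nn_integral_le)
    fix A assume "A \<in> sets M"
    then show "(\<integral>\<^sup>+x. RN_deriv M N x * indicator A x \<partial>M) \<le> emeasure M A"
      using le[of A] density by (simp add: emeasure_density[symmetric])
  qed (auto simp: emeasure_finite)
qed

lemma nn_integral_one_minus_density_add:
  assumes "finite_measure M" and density: "density M f = N" and [measurable]: "f \<in> borel_measurable M"
    and le_one: "AE x in M. f x \<le> 1" and A[measurable]: "A \<in> sets M"
  shows "(\<integral>\<^sup>+x. (1 - f x) * indicator A x \<partial>M) + emeasure N A = emeasure M A"
proof -
  interpret finite_measure M by fact
  have NA: "emeasure N A = (\<integral>\<^sup>+x. f x * indicator A x \<partial>M)"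
    using density[symmetric] by (simp add: emeasure_density)
  have "(\<integral>\<^sup>+x. f x * indicator A x \<partial>M) \<le> (\<integral>\<^sup>+x. indicator A x \<partial>M)"
    using le_one by (intro nn_integral_mono_AE) (auto split: split_indicator)
  then have NA_le: "emeasure N A \<le> emeasure M A"
    using NA by simp
  have "(\<integral>\<^sup>+x. (1 - f x) * indicator A x \<partial>M) = (\<integral>\<^sup>+x. indicator A x - f x * indicator A x \<partial>M)"
    by (intro nn_integral_cong) (auto split: split_indicator)
  also have "\<dots> = emeasure M A - emeasure N A"
    using le_one NA NA_le by (subst nn_integral_diff) (auto simp: top_unique split: split_indicator)
  finally show ?thesis
    using NA_le by (simp add: diff_add_cancel_ennreal)
qed

definition add_measure :: "'a measure \<Rightarrow> 'a measure \<Rightarrow> 'a measure" where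
  "add_measure M N = measure_of (space M) (sets M) (\<lambda>A. emeasure M A + emeasure N A)"

lemma sets_add_measure [simp, measurable_cong]: "sets (add_measure M N) = sets M"
  unfolding add_measure_def by (simp add: sets.space_closed)

lemma space_add_measure [simp]: "space (add_measure M N) = space M"
  unfolding add_measure_def by (simp add: sets.space_closed)

lemma emeasure_add_measure:
  assumes "sets N = sets M" and "A \<in> sets M"
  shows "emeasure (add_measure M N) A = emeasure M A + emeasure N A"
  unfolding add_measure_def
proof (rule emeasure_measure_of_sigma[OF sets.sigma_algebra_axioms _ _ \<open>A \<in> sets M\<close>])
  show "positive (sets M) (\<lambda>A. emeasure M A + emeasure N A)"
    by (simp add: positive_def)
  show "countably_additive (sets M) (\<lambda>A. emeasure M A + emeasure N A)"
    using assms(1) by (auto simp: countably_additive_def suminf_add[symmetric] suminf_emeasure)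
qed

lemma nn_integral_add_measure:
  assumes sets_eq: "sets N = sets M" and f: "f \<in> borel_measurable M"
  shows "(\<integral>\<^sup>+x. f x \<partial>add_measure M N) = (\<integral>\<^sup>+x. f x \<partial>M) + (\<integral>\<^sup>+x. f x \<partial>N)"
  using f
proof (induction rule: borel_measurable_induct)
  case (cong f g)
  have "space N = space M" using sets_eq by (rule sets_eq_imp_space_eq)
  with cong show ?case
    by (metis (no_types, lifting) nn_integral_cong space_add_measure)
next
  case (set A)
  then show ?case
    using sets_eq by (simp add: emeasure_add_measure)
next
  case (mult u c)
  moreover have "u \<in> borel_measurable N"
    using mult(2) by (subst measurable_cong_sets[OF sets_eq refl])
  ultimately show ?case
    by (simp add: nn_integral_cmult distrib_left)
next
  case (add u v)
  moreover have "u \<in> borel_measurable N" "v \<in> borel_measurable N"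
    using \<open>u \<in> borel_measurable M\<close> \<open>v \<in> borel_measurable M\<close>
    by (subst measurable_cong_sets[OF sets_eq refl], simp)+
  ultimately show ?case
    by (simp add: nn_integral_add add_ac)
next
  case (seq U)
  note U_meas = seq(1) seq(1)[unfolded measurable_cong_sets[OF sets_eq refl, symmetric]]
  have inc: "incseq (\<lambda>i. \<integral>\<^sup>+x. U i x \<partial>K)" for K
    using \<open>incseq U\<close> by (auto simp: incseq_def le_fun_def intro!: nn_integral_mono)
  have "(\<integral>\<^sup>+x. (SUP i. U i) x \<partial>add_measure M N) = (SUP i. \<integral>\<^sup>+x. U i x \<partial>add_measure M N)"
    using nn_integral_monotone_convergence_SUP[OF \<open>incseq U\<close>, of "add_measure M N"] U_meas
    by (simp add: image_comp)
  also have "\<dots> = (SUP i. (\<integral>\<^sup>+x. U i x \<partial>M) + (\<integral>\<^sup>+x. U i x \<partial>N))"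
    using seq.IH by simp
  also have "\<dots> = (SUP i. \<integral>\<^sup>+x. U i x \<partial>M) + (SUP i. \<integral>\<^sup>+x. U i x \<partial>N)"
    by (rule ennreal_SUP_add[OF inc inc])
  also have "\<dots> = (\<integral>\<^sup>+x. (SUP i. U i) x \<partial>M) + (\<integral>\<^sup>+x. (SUP i. U i) x \<partial>N)"
    using nn_integral_monotone_convergence_SUP[OF \<open>incseq U\<close>, of M]
      nn_integral_monotone_convergence_SUP[OF \<open>incseq U\<close>, of N] U_meas
    by (simp add: image_comp)
  finally show ?case .
qed

lemma measure_of_eq_measure:
  assumes "space K = \<Omega>" and "sets K = \<Sigma>" and "\<And>A. A \<in> \<Sigma> \<Longrightarrow> F A = emeasure K A"
  shows "measure_of \<Omega> \<Sigma> F = K"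
proof -
  have "measure_of \<Omega> \<Sigma> F = measure_of (space K) (sets K) (emeasure K)"
    using assms sets.space_closed[of K] by (auto intro!: measure_of_eq simp: sets.sigma_sets_eq)
  then show ?thesis
    by (simp add: measure_of_of_measure)
qed

lemma borel_measurable_extend_by_zero:
  fixes f :: "'a::topological_space \<Rightarrow> 'b::real_normed_vector"
  assumes "A \<in> sets borel" and "f \<in> borel_measurable (restrict_space borel A)"
  shows "(\<lambda>x. if x \<in> A then f x else 0) \<in> borel_measurable borel"
proof -
  have "(\<lambda>x. indicator A x *\<^sub>R f x) \<in> borel_measurable borel"
    using assms by (simp add: borel_measurable_restrict_space_iff)
  moreover have "(\<lambda>x. indicator A x *\<^sub>R f x) = (\<lambda>x. if x \<in> A then f x else 0)"
    by (auto simp: indicator_def)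
  ultimately show ?thesis
    by simp
qed

lemma nn_integral_bounded_finite:
  assumes "finite_measure M" and "\<And>x. x \<in> space M \<Longrightarrow> f x \<le> C"
  shows "(\<integral>\<^sup>+x. ennreal (f x) \<partial>M) \<noteq> \<infinity>"
proof -
  have "(\<integral>\<^sup>+x. ennreal (f x) \<partial>M) \<le> (\<integral>\<^sup>+x. ennreal C \<partial>M)"
    using assms(2) by (intro nn_integral_mono ennreal_leI)
  also have "\<dots> < \<infinity>"
    using finite_measure.emeasure_finite[OF assms(1)] by (simp add: ennreal_mult_less_top less_top)
  finally show ?thesis
    by simp
qed

lemma bij_betw_INF_eq_and_minimizers:
  assumes bij: "bij_betw \<Phi> A B" and cost: "\<And>x. x \<in> A \<Longrightarrow> g (\<Phi> x) = f x"
  shows "(INF x\<in>A. f x) = (INF y\<in>B. g y)"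
    and "bij_betw \<Phi> {x\<in>A. f x = (INF x\<in>A. f x)} {y\<in>B. g y = (INF y\<in>B. g y)}"
proof -
  have image: "\<Phi> ` A = B"
    using bij by (simp add: bij_betw_def)
  show INF_eq: "(INF x\<in>A. f x) = (INF y\<in>B. g y)"
    unfolding image[symmetric] image_image using cost by (simp cong: INF_cong)
  have minimizers: "\<Phi> ` {x\<in>A. f x = (INF x\<in>A. f x)} = {y\<in>B. g y = (INF y\<in>B. g y)}"
    using image cost by (auto simp: INF_eq)
  show "bij_betw \<Phi> {x\<in>A. f x = (INF x\<in>A. f x)} {y\<in>B. g y = (INF y\<in>B. g y)}"
    using bij_betw_subset[OF bij _ minimizers] by blast
qed

lemma enn2ereal_add_diff_scaled:
  fixes W1 W2 P N :: ennreal and b :: real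
  assumes "0 \<le> b" and "P \<noteq> \<infinity>" and "N \<noteq> \<infinity>"
  shows "enn2ereal (ennreal b * P + W1 + W2) - enn2ereal (ennreal b * N)
    = enn2ereal W1 + enn2ereal W2 + ereal b * (enn2ereal P - enn2ereal N)"
  using assms
  by (cases P rule: ennreal_cases; cases N rule: ennreal_cases;
      cases W1 rule: ennreal_cases; cases W2 rule: ennreal_cases)
     (simp_all add: plus_ennreal.rep_eq times_ennreal.rep_eq enn2ereal_ennreal algebra_simps)

locale one_point_extension =
  fixes T :: "'a::metric_space set" and s :: 'a and \<mu> \<nu> :: "'a measure"
  assumes compact_T: "compact T" and s_notin_T: "s \<notin> T"
    and \<mu>: "\<mu> \<in> fin_measures T" and \<nu>: "\<nu> \<in> fin_measures T"
begin

declare insert_Times_insert [simp del]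

abbreviation "S \<equiv> insert s T"
abbreviation "f\<^sub>1 \<gamma> \<equiv> RN_deriv \<mu> (marg1 T \<gamma>)"
abbreviation "f\<^sub>2 \<gamma> \<equiv> RN_deriv \<nu> (marg2 T \<gamma>)"
abbreviation "\<Gamma> \<equiv> couplings S (hat_meas T s \<mu> \<nu>) (hat_meas T s \<nu> \<mu>)"

lemma sets_borel_T [measurable]: "T \<in> sets borel"
  and sets_borel_S [measurable]: "S \<in> sets borel"
  and sets_borel_TT [measurable]: "T \<times> T \<in> sets borel"
  and sets_borel_SS [measurable]: "S \<times> S \<in> sets borel"
  using compact_imp_closed[OF compact_T] by (simp_all add: borel_closed closed_Times)

lemma space_restrict_S [simp]: "space (restrict_space borel S) = S"
  and space_restrict_SS [simp]: "space (restrict_space borel (S \<times> S)) = S \<times> S"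
  by (simp_all add: space_restrict_space2)

lemma sets_restrict_SS_TT: "T \<times> T \<in> sets (restrict_space borel (S \<times> S))"
  and sets_restrict_S_T: "T \<in> sets (restrict_space borel S)"
  and sets_restrict_S_s: "{s} \<in> sets (restrict_space borel S)"
  by (auto simp: sets_restrict_space_iff)

lemma sets_restrict_S_Int_T:
  "A \<in> sets (restrict_space borel S) \<Longrightarrow> A \<inter> T \<in> sets (restrict_space borel T)"
  by (auto simp: sets_restrict_space_iff)

lemma restrict_restrict_SS_TT:
  "restrict_space (restrict_space borel (S \<times> S)) (T \<times> T) = restrict_space borel (T \<times> T)"
  by (subst restrict_restrict_space) (auto intro!: arg_cong[where f="restrict_space borel"])

lemma sets_restrict_T_S:
  "A \<in> sets (restrict_space borel T) \<Longrightarrow> A \<in> sets (restrict_space borel S)"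
  by (auto simp: sets_restrict_space_iff)

lemma sets_restrict_TT_SS:
  "A \<in> sets (restrict_space borel (T \<times> T)) \<Longrightarrow> A \<in> sets (restrict_space borel (S \<times> S))"
  by (auto simp: sets_restrict_space_iff)

lemma sets_\<mu>: "sets \<mu> = sets (restrict_space borel T)" and space_\<mu> [simp]: "space \<mu> = T"
  and finite_measure_\<mu>: "finite_measure \<mu>"
  and sets_\<nu>: "sets \<nu> = sets (restrict_space borel T)" and space_\<nu> [simp]: "space \<nu> = T"
  and finite_measure_\<nu>: "finite_measure \<nu>"
  using \<mu> \<nu> by (auto simp: fin_measures_def dest: sets_eq_imp_space_eq)

lemma emeasure_\<mu>_finite [simp]: "emeasure \<mu> A \<noteq> \<top>"
  and emeasure_\<nu>_finite [simp]: "emeasure \<nu> A \<noteq> \<top>"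
  using finite_measure.emeasure_finite[OF finite_measure_\<mu>]
    finite_measure.emeasure_finite[OF finite_measure_\<nu>] by auto

lemma measurable_Pair_s: "(\<lambda>x. (x, s)) \<in> restrict_space borel T \<rightarrow>\<^sub>M restrict_space borel (S \<times> S)"
  and measurable_s_Pair: "(\<lambda>y. (s, y)) \<in> restrict_space borel T \<rightarrow>\<^sub>M restrict_space borel (S \<times> S)"
  and measurable_embed_T: "id \<in> restrict_space borel T \<rightarrow>\<^sub>M restrict_space borel S"
  and measurable_embed_TT: "id \<in> restrict_space borel (T \<times> T) \<rightarrow>\<^sub>M restrict_space borel (S \<times> S)"
  and measurable_fst_TT: "fst \<in> restrict_space borel (T \<times> T) \<rightarrow>\<^sub>M restrict_space borel T"
  and measurable_snd_TT: "snd \<in> restrict_space borel (T \<times> T) \<rightarrow>\<^sub>M restrict_space borel T"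
  and measurable_fst_SS: "fst \<in> restrict_space borel (S \<times> S) \<rightarrow>\<^sub>M restrict_space borel S"
  and measurable_snd_SS: "snd \<in> restrict_space borel (S \<times> S) \<rightarrow>\<^sub>M restrict_space borel S"
  by (rule measurable_restrict_space2;
      auto intro!: measurable_restrict_space1 borel_measurable_continuous_onI continuous_intros)+

lemma sets_restrict_S_Times:
  assumes "A \<in> sets (restrict_space borel S)" and "B \<in> sets (restrict_space borel S)"
  shows "A \<times> B \<in> sets (restrict_space borel (S \<times> S))"
proof -
  have "A \<times> B = (fst -` A \<inter> space (restrict_space borel (S \<times> S))) \<inter>
      (snd -` B \<inter> space (restrict_space borel (S \<times> S)))"
    using assms[THEN sets.sets_into_space] by auto
  then show ?thesis
    using measurable_sets[OF measurable_fst_SS assms(1)] measurable_sets[OF measurable_snd_SS assms(2)]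
    by auto
qed

lemma sets_restrict_SS_ss: "{(s, s)} \<in> sets (restrict_space borel (S \<times> S))"
proof -
  have "{(s, s)} = {s} \<times> {s}"
    by auto
  then show ?thesis
    using sets_restrict_S_Times[OF sets_restrict_S_s sets_restrict_S_s] by simp
qed

lemma
  assumes "\<gamma> \<in> sub_plans T \<mu> \<nu>"
  shows sets_sub_plan: "sets \<gamma> = sets (restrict_space borel (T \<times> T))"
    and space_sub_plan: "space \<gamma> = T \<times> T"
    and finite_measure_sub_plan: "finite_measure \<gamma>"
  using assms by (auto simp: sub_plans_def dest: sets_eq_imp_space_eq)

lemma
  assumes "sets \<gamma> = sets (restrict_space borel (T \<times> T))" and "A \<in> sets (restrict_space borel T)"
  shows emeasure_marg1: "emeasure (marg1 T \<gamma>) A = emeasure \<gamma> (A \<times> T)"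
    and emeasure_marg2: "emeasure (marg2 T \<gamma>) A = emeasure \<gamma> (T \<times> A)"
proof -
  have "space \<gamma> = T \<times> T" and "A \<subseteq> T"
    using assms sets.sets_into_space[OF assms(2)] by (auto dest: sets_eq_imp_space_eq)
  then have "fst -` A \<inter> space \<gamma> = A \<times> T" and "snd -` A \<inter> space \<gamma> = T \<times> A"
    by auto
  moreover have "fst \<in> \<gamma> \<rightarrow>\<^sub>M restrict_space borel T" and "snd \<in> \<gamma> \<rightarrow>\<^sub>M restrict_space borel T"
    using measurable_fst_TT measurable_snd_TT by (simp_all add: measurable_cong_sets[OF assms(1) refl])
  ultimately show "emeasure (marg1 T \<gamma>) A = emeasure \<gamma> (A \<times> T)"
    and "emeasure (marg2 T \<gamma>) A = emeasure \<gamma> (T \<times> A)"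
    using assms(2) by (simp_all add: marg1_def marg2_def emeasure_distr)
qed

lemma
  assumes "\<gamma> \<in> sub_plans T \<mu> \<nu>"
  shows density_f\<^sub>1: "density \<mu> (f\<^sub>1 \<gamma>) = marg1 T \<gamma>" and AE_f\<^sub>1_le_one: "AE x in \<mu>. f\<^sub>1 \<gamma> x \<le> 1"
    and density_f\<^sub>2: "density \<nu> (f\<^sub>2 \<gamma>) = marg2 T \<gamma>" and AE_f\<^sub>2_le_one: "AE x in \<nu>. f\<^sub>2 \<gamma> x \<le> 1"
proof -
  have "sets (marg1 T \<gamma>) = sets \<mu>" and "sets (marg2 T \<gamma>) = sets \<nu>"
    by (simp_all add: marg1_def marg2_def sets_\<mu> sets_\<nu>)
  moreover have "emeasure (marg1 T \<gamma>) A \<le> emeasure \<mu> A" if "A \<in> sets \<mu>" for A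
    using assms that by (simp add: sub_plans_def sets_\<mu>)
  moreover have "emeasure (marg2 T \<gamma>) A \<le> emeasure \<nu> A" if "A \<in> sets \<nu>" for A
    using assms that by (simp add: sub_plans_def sets_\<nu>)
  ultimately show "density \<mu> (f\<^sub>1 \<gamma>) = marg1 T \<gamma>" "AE x in \<mu>. f\<^sub>1 \<gamma> x \<le> 1"
    and "density \<nu> (f\<^sub>2 \<gamma>) = marg2 T \<gamma>" "AE x in \<nu>. f\<^sub>2 \<gamma> x \<le> 1"
    using finite_measure_\<mu> finite_measure_\<nu>
    by (auto intro: density_RN_deriv_of_le AE_RN_deriv_le_one_of_le)
qed

lemma unmatched_mass_fst:
  assumes \<gamma>: "\<gamma> \<in> sub_plans T \<mu> \<nu>" and B: "B \<in> sets (restrict_space borel T)"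
  shows "(\<integral>\<^sup>+x. (1 - f\<^sub>1 \<gamma> x) * indicator B x \<partial>\<mu>) + emeasure \<gamma> (B \<times> T) = emeasure \<mu> B"
proof -
  have "(\<integral>\<^sup>+x. (1 - f\<^sub>1 \<gamma> x) * indicator B x \<partial>\<mu>) + emeasure (marg1 T \<gamma>) B = emeasure \<mu> B"
    using B by (intro nn_integral_one_minus_density_add[OF finite_measure_\<mu> density_f\<^sub>1[OF \<gamma>] _ AE_f\<^sub>1_le_one[OF \<gamma>]])
      (simp_all add: sets_\<mu>)
  then show ?thesis
    using emeasure_marg1[OF sets_sub_plan[OF \<gamma>] B] by simp
qed

lemma unmatched_mass_snd:
  assumes \<gamma>: "\<gamma> \<in> sub_plans T \<mu> \<nu>" and B: "B \<in> sets (restrict_space borel T)"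
  shows "(\<integral>\<^sup>+y. (1 - f\<^sub>2 \<gamma> y) * indicator B y \<partial>\<nu>) + emeasure \<gamma> (T \<times> B) = emeasure \<nu> B"
proof -
  have "(\<integral>\<^sup>+y. (1 - f\<^sub>2 \<gamma> y) * indicator B y \<partial>\<nu>) + emeasure (marg2 T \<gamma>) B = emeasure \<nu> B"
    using B by (intro nn_integral_one_minus_density_add[OF finite_measure_\<nu> density_f\<^sub>2[OF \<gamma>] _ AE_f\<^sub>2_le_one[OF \<gamma>]])
      (simp_all add: sets_\<nu>)
  then show ?thesis
    using emeasure_marg2[OF sets_sub_plan[OF \<gamma>] B] by simp
qed

lemma sets_hat_meas [simp]: "sets (hat_meas T s M N) = sets (restrict_space borel S)"
proof -
  have "sets (restrict_space borel S) \<subseteq> Pow S"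
    using sets.space_closed[of "restrict_space borel S"] by simp
  then show ?thesis
    unfolding hat_meas_def
    using sets.sigma_sets_eq[of "restrict_space borel S"] by (simp add: sets_measure_of)
qed

lemma emeasure_hat_meas:
  assumes M: "sets M = sets (restrict_space borel T)" and A: "A \<in> sets (restrict_space borel S)"
  shows "emeasure (hat_meas T s M N) A = emeasure M (A \<inter> T) + emeasure N T * indicator A s"
proof -
  let ?K = "add_measure (distr M (restrict_space borel S) id)
    (scale_measure (emeasure N T) (return (restrict_space borel S) s))"
  have id: "id \<in> M \<rightarrow>\<^sub>M restrict_space borel S"
    using measurable_embed_T by (simp add: measurable_cong_sets[OF M refl])
  have space_M: "space M = T"
    using sets_eq_imp_space_eq[OF M] by simp
  have emeasure_K: "emeasure ?K B = emeasure M (B \<inter> T) + emeasure N T * indicator B s"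
    if "B \<in> sets (restrict_space borel S)" for B
    using that id by (simp add: emeasure_add_measure emeasure_distr space_M)
  have "hat_meas T s M N = ?K"
    unfolding hat_meas_def by (rule measure_of_eq_measure) (simp_all add: emeasure_K)
  then show ?thesis
    using emeasure_K[OF A] by simp
qed

lemma hat_plan_eq_add_measure:
  assumes \<gamma>: "\<gamma> \<in> sub_plans T \<mu> \<nu>"
  shows "hat_plan T s \<mu> \<nu> \<gamma> =
    add_measure (add_measure (add_measure
      (distr \<gamma> (restrict_space borel (S \<times> S)) id)
      (distr (density \<mu> (\<lambda>x. 1 - f\<^sub>1 \<gamma> x)) (restrict_space borel (S \<times> S)) (\<lambda>x. (x, s))))
      (distr (density \<nu> (\<lambda>y. 1 - f\<^sub>2 \<gamma> y)) (restrict_space borel (S \<times> S)) (\<lambda>y. (s, y))))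
      (scale_measure (emeasure \<gamma> (T \<times> T)) (return (restrict_space borel (S \<times> S)) (s, s)))"
    (is "_ = ?K")
  unfolding hat_plan_def
proof (rule measure_of_eq_measure)
  show "space ?K = S \<times> S" and "sets ?K = sets (restrict_space borel (S \<times> S))"
    by simp_all
  have id: "id \<in> \<gamma> \<rightarrow>\<^sub>M restrict_space borel (S \<times> S)"
    using measurable_embed_TT by (simp add: measurable_cong_sets[OF sets_sub_plan[OF \<gamma>] refl])
  have left: "(\<lambda>x. (x, s)) \<in> density \<mu> g \<rightarrow>\<^sub>M restrict_space borel (S \<times> S)"
    and right: "(\<lambda>y. (s, y)) \<in> density \<nu> g \<rightarrow>\<^sub>M restrict_space borel (S \<times> S)" for g
    using measurable_Pair_s measurable_s_Pair
    by (simp_all add: measurable_cong_sets[OF sets_\<mu> refl] measurable_cong_sets[OF sets_\<nu> refl])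
  fix A assume A: "A \<in> sets (restrict_space borel (S \<times> S))"
  have "id -` A \<inter> space \<gamma> = A \<inter> (T \<times> T)"
    by (auto simp: space_sub_plan[OF \<gamma>])
  moreover have "(\<lambda>x. (x, s)) -` A \<inter> space \<mu> \<in> sets \<mu>" and "(\<lambda>y. (s, y)) -` A \<inter> space \<nu> \<in> sets \<nu>"
    using measurable_sets[OF left A] measurable_sets[OF right A] by simp_all
  moreover have "(\<integral>\<^sup>+x. (1 - f\<^sub>1 \<gamma> x) * indicator ((\<lambda>x. (x, s)) -` A \<inter> space \<mu>) x \<partial>\<mu>)
      = (\<integral>\<^sup>+x. (1 - f\<^sub>1 \<gamma> x) * indicator A (x, s) \<partial>\<mu>)"
    and "(\<integral>\<^sup>+y. (1 - f\<^sub>2 \<gamma> y) * indicator ((\<lambda>y. (s, y)) -` A \<inter> space \<nu>) y \<partial>\<nu>)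
      = (\<integral>\<^sup>+y. (1 - f\<^sub>2 \<gamma> y) * indicator A (s, y) \<partial>\<nu>)"
    by (auto intro!: nn_integral_cong split: split_indicator)
  ultimately show "emeasure \<gamma> (A \<inter> (T \<times> T))
      + (\<integral>\<^sup>+x. (1 - f\<^sub>1 \<gamma> x) * indicator A (x, s) \<partial>\<mu>)
      + (\<integral>\<^sup>+y. (1 - f\<^sub>2 \<gamma> y) * indicator A (s, y) \<partial>\<nu>)
      + emeasure \<gamma> (T \<times> T) * indicator A (s, s) = emeasure ?K A"
    using A id left right
    by (simp add: emeasure_add_measure emeasure_distr emeasure_density del: space_\<mu> space_\<nu>)
qed

lemma
  assumes "\<gamma> \<in> sub_plans T \<mu> \<nu>"
  shows sets_hat_plan: "sets (hat_plan T s \<mu> \<nu> \<gamma>) = sets (restrict_space borel (S \<times> S))"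
    and space_hat_plan: "space (hat_plan T s \<mu> \<nu> \<gamma>) = S \<times> S"
  using assms by (simp_all add: hat_plan_eq_add_measure)

lemma nn_integral_hat_plan:
  assumes \<gamma>: "\<gamma> \<in> sub_plans T \<mu> \<nu>"
    and h: "h \<in> borel_measurable (restrict_space borel (S \<times> S))"
  shows "(\<integral>\<^sup>+z. h z \<partial>hat_plan T s \<mu> \<nu> \<gamma>) = (\<integral>\<^sup>+z. h z \<partial>\<gamma>)
     + (\<integral>\<^sup>+x. (1 - f\<^sub>1 \<gamma> x) * h (x, s) \<partial>\<mu>)
     + (\<integral>\<^sup>+y. (1 - f\<^sub>2 \<gamma> y) * h (s, y) \<partial>\<nu>)
     + emeasure \<gamma> (T \<times> T) * h (s, s)"
proof -
  have id: "id \<in> \<gamma> \<rightarrow>\<^sub>M restrict_space borel (S \<times> S)"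
    using measurable_embed_TT by (simp add: measurable_cong_sets[OF sets_sub_plan[OF \<gamma>] refl])
  have left: "(\<lambda>x. (x, s)) \<in> M \<rightarrow>\<^sub>M restrict_space borel (S \<times> S)" if "sets M = sets \<mu>" for M
    using measurable_Pair_s by (simp add: measurable_cong_sets[OF that[unfolded sets_\<mu>] refl])
  have right: "(\<lambda>y. (s, y)) \<in> M \<rightarrow>\<^sub>M restrict_space borel (S \<times> S)" if "sets M = sets \<nu>" for M
    using measurable_s_Pair by (simp add: measurable_cong_sets[OF that[unfolded sets_\<nu>] refl])
  have "h \<circ> id \<in> borel_measurable \<gamma>" "h \<circ> (\<lambda>x. (x, s)) \<in> borel_measurable \<mu>"
    "h \<circ> (\<lambda>y. (s, y)) \<in> borel_measurable \<nu>"
    using measurable_comp[OF id h] measurable_comp[OF left[OF refl] h] measurable_comp[OF right[OF refl] h]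
    by simp_all
  then show ?thesis
    using h id left right
    by (simp add: hat_plan_eq_add_measure[OF \<gamma>] nn_integral_add_measure nn_integral_distr
        nn_integral_density nn_integral_scale_measure nn_integral_return o_def)
qed

lemma emeasure_hat_plan:
  assumes \<gamma>: "\<gamma> \<in> sub_plans T \<mu> \<nu>" and A: "A \<in> sets (restrict_space borel (S \<times> S))"
  shows "emeasure (hat_plan T s \<mu> \<nu> \<gamma>) A = emeasure \<gamma> (A \<inter> (T \<times> T))
     + (\<integral>\<^sup>+x. (1 - f\<^sub>1 \<gamma> x) * indicator A (x, s) \<partial>\<mu>)
     + (\<integral>\<^sup>+y. (1 - f\<^sub>2 \<gamma> y) * indicator A (s, y) \<partial>\<nu>)
     + emeasure \<gamma> (T \<times> T) * indicator A (s, s)"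
proof -
  have "A \<inter> space \<gamma> \<in> sets \<gamma>"
    using A by (auto simp: space_sub_plan[OF \<gamma>] sets_sub_plan[OF \<gamma>] sets_restrict_space_iff)
  then show ?thesis
    using nn_integral_hat_plan[OF \<gamma>, of "indicator A"] A
    by (simp add: sets_hat_plan[OF \<gamma>] nn_integral_indicator' space_sub_plan[OF \<gamma>])
qed

lemma emeasure_hat_plan_Times_S:
  assumes \<gamma>: "\<gamma> \<in> sub_plans T \<mu> \<nu>" and A: "A \<in> sets (restrict_space borel S)"
  shows "emeasure (hat_plan T s \<mu> \<nu> \<gamma>) (A \<times> S) = emeasure \<mu> (A \<inter> T) + emeasure \<nu> T * indicator A s"
proof -
  have AS: "A \<times> S \<in> sets (restrict_space borel (S \<times> S))"
    using A sets.top[of "restrict_space borel S"] by (intro sets_restrict_S_Times) simp_all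
  have AT: "A \<inter> T \<in> sets (restrict_space borel T)" and T: "T \<in> sets (restrict_space borel T)"
    using A sets.top[of "restrict_space borel T"] by (simp_all add: sets_restrict_S_Int_T)
  have "(A \<times> S) \<inter> (T \<times> T) = (A \<inter> T) \<times> T"
    by auto
  moreover have "(\<integral>\<^sup>+x. (1 - f\<^sub>1 \<gamma> x) * indicator (A \<times> S) (x, s) \<partial>\<mu>)
      = (\<integral>\<^sup>+x. (1 - f\<^sub>1 \<gamma> x) * indicator (A \<inter> T) x \<partial>\<mu>)"
    by (intro nn_integral_cong) (auto split: split_indicator)
  moreover have "(\<integral>\<^sup>+y. (1 - f\<^sub>2 \<gamma> y) * indicator (A \<times> S) (s, y) \<partial>\<nu>)
      = indicator A s * (\<integral>\<^sup>+y. (1 - f\<^sub>2 \<gamma> y) * indicator T y \<partial>\<nu>)"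
    by (cases "s \<in> A") (auto simp: indicator_def intro!: nn_integral_cong)
  moreover have "indicator (A \<times> S) (s, s) = (indicator A s :: ennreal)"
    by (simp add: indicator_def)
  ultimately have "emeasure (hat_plan T s \<mu> \<nu> \<gamma>) (A \<times> S)
      = ((\<integral>\<^sup>+x. (1 - f\<^sub>1 \<gamma> x) * indicator (A \<inter> T) x \<partial>\<mu>) + emeasure \<gamma> ((A \<inter> T) \<times> T))
        + indicator A s * ((\<integral>\<^sup>+y. (1 - f\<^sub>2 \<gamma> y) * indicator T y \<partial>\<nu>) + emeasure \<gamma> (T \<times> T))"
    by (simp add: emeasure_hat_plan[OF \<gamma> AS] distrib_left mult_ac add_ac)
  then show ?thesis
    using unmatched_mass_fst[OF \<gamma> AT] unmatched_mass_snd[OF \<gamma> T] by (simp add: mult.commute)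
qed

lemma emeasure_hat_plan_S_Times:
  assumes \<gamma>: "\<gamma> \<in> sub_plans T \<mu> \<nu>" and A: "A \<in> sets (restrict_space borel S)"
  shows "emeasure (hat_plan T s \<mu> \<nu> \<gamma>) (S \<times> A) = emeasure \<nu> (A \<inter> T) + emeasure \<mu> T * indicator A s"
proof -
  have SA: "S \<times> A \<in> sets (restrict_space borel (S \<times> S))"
    using A sets.top[of "restrict_space borel S"] by (intro sets_restrict_S_Times) simp_all
  have AT: "A \<inter> T \<in> sets (restrict_space borel T)" and T: "T \<in> sets (restrict_space borel T)"
    using A sets.top[of "restrict_space borel T"] by (simp_all add: sets_restrict_S_Int_T)
  have "(S \<times> A) \<inter> (T \<times> T) = T \<times> (A \<inter> T)"
    by auto
  moreover have "(\<integral>\<^sup>+y. (1 - f\<^sub>2 \<gamma> y) * indicator (S \<times> A) (s, y) \<partial>\<nu>)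
      = (\<integral>\<^sup>+y. (1 - f\<^sub>2 \<gamma> y) * indicator (A \<inter> T) y \<partial>\<nu>)"
    by (intro nn_integral_cong) (auto split: split_indicator)
  moreover have "(\<integral>\<^sup>+x. (1 - f\<^sub>1 \<gamma> x) * indicator (S \<times> A) (x, s) \<partial>\<mu>)
      = indicator A s * (\<integral>\<^sup>+x. (1 - f\<^sub>1 \<gamma> x) * indicator T x \<partial>\<mu>)"
    by (cases "s \<in> A") (auto simp: indicator_def intro!: nn_integral_cong)
  moreover have "indicator (S \<times> A) (s, s) = (indicator A s :: ennreal)"
    by (simp add: indicator_def)
  ultimately have "emeasure (hat_plan T s \<mu> \<nu> \<gamma>) (S \<times> A)
      = ((\<integral>\<^sup>+y. (1 - f\<^sub>2 \<gamma> y) * indicator (A \<inter> T) y \<partial>\<nu>) + emeasure \<gamma> (T \<times> (A \<inter> T)))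
        + indicator A s * ((\<integral>\<^sup>+x. (1 - f\<^sub>1 \<gamma> x) * indicator T x \<partial>\<mu>) + emeasure \<gamma> (T \<times> T))"
    by (simp add: emeasure_hat_plan[OF \<gamma> SA] distrib_left mult_ac add_ac)
  then show ?thesis
    using unmatched_mass_snd[OF \<gamma> AT] unmatched_mass_fst[OF \<gamma> T] by (simp add: mult.commute)
qed

lemma hat_plan_in_couplings:
  assumes \<gamma>: "\<gamma> \<in> sub_plans T \<mu> \<nu>"
  shows "hat_plan T s \<mu> \<nu> \<gamma> \<in> \<Gamma>"
proof -
  let ?H = "hat_plan T s \<mu> \<nu> \<gamma>"
  have fst: "fst \<in> ?H \<rightarrow>\<^sub>M restrict_space borel S" and snd: "snd \<in> ?H \<rightarrow>\<^sub>M restrict_space borel S"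
    using measurable_fst_SS measurable_snd_SS
    by (simp_all add: measurable_cong_sets[OF sets_hat_plan[OF \<gamma>] refl])
  have "fst -` A \<inter> space ?H = A \<times> S" and "snd -` A \<inter> space ?H = S \<times> A"
    if "A \<in> sets (restrict_space borel S)" for A
    using sets.sets_into_space[OF that] by (auto simp: space_hat_plan[OF \<gamma>])
  then have "distr ?H (restrict_space borel S) fst = hat_meas T s \<mu> \<nu>"
    and "distr ?H (restrict_space borel S) snd = hat_meas T s \<nu> \<mu>"
    using fst snd
    by (auto intro!: measure_eqI simp: emeasure_distr emeasure_hat_meas sets_\<mu> sets_\<nu>
        emeasure_hat_plan_Times_S[OF \<gamma>] emeasure_hat_plan_S_Times[OF \<gamma>])
  with sets_hat_plan[OF \<gamma>] show ?thesis
    by (simp add: couplings_def)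
qed

lemma restrict_hat_plan:
  assumes \<gamma>: "\<gamma> \<in> sub_plans T \<mu> \<nu>"
  shows "restrict_space (hat_plan T s \<mu> \<nu> \<gamma>) (T \<times> T) = \<gamma>"
proof (rule measure_eqI)
  let ?H = "hat_plan T s \<mu> \<nu> \<gamma>"
  show sets_eq: "sets (restrict_space ?H (T \<times> T)) = sets \<gamma>"
    using sets_restrict_space_cong[OF sets_hat_plan[OF \<gamma>], of "T \<times> T"]
    by (simp add: restrict_restrict_SS_TT sets_sub_plan[OF \<gamma>])
  fix A assume "A \<in> sets (restrict_space ?H (T \<times> T))"
  then have A: "A \<in> sets (restrict_space borel (T \<times> T))"
    by (simp add: sets_eq sets_sub_plan[OF \<gamma>])
  then have "A \<subseteq> T \<times> T"
    using sets.sets_into_space by fastforce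
  moreover have "T \<times> T \<inter> space ?H \<in> sets ?H"
  proof -
    have "T \<times> T \<inter> space ?H = T \<times> T"
      by (auto simp: space_hat_plan[OF \<gamma>])
    then show ?thesis
      using sets_restrict_SS_TT by (simp add: sets_hat_plan[OF \<gamma>])
  qed
  moreover have "indicator A (x, s) = (0::ennreal)" "indicator A (s, x) = (0::ennreal)" for x
    using \<open>A \<subseteq> T \<times> T\<close> s_notin_T by (auto simp: indicator_def)
  ultimately show "emeasure (restrict_space ?H (T \<times> T)) A = emeasure \<gamma> A"
    using emeasure_hat_plan[OF \<gamma> sets_restrict_TT_SS[OF A]]
    by (simp add: emeasure_restrict_space Int_absorb2)
qed

lemma
  assumes "g \<in> \<Gamma>"
  shows sets_coupling: "sets g = sets (restrict_space borel (S \<times> S))"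
    and space_coupling: "space g = S \<times> S"
  using assms by (auto simp: couplings_def dest: sets_eq_imp_space_eq)

lemma
  assumes g: "g \<in> \<Gamma>"
    and B: "B \<in> sets (restrict_space borel S)"
  shows emeasure_coupling_Times_S: "emeasure g (B \<times> S) = emeasure \<mu> (B \<inter> T) + emeasure \<nu> T * indicator B s"
    and emeasure_coupling_S_Times: "emeasure g (S \<times> B) = emeasure \<nu> (B \<inter> T) + emeasure \<mu> T * indicator B s"
proof -
  have "fst \<in> g \<rightarrow>\<^sub>M restrict_space borel S" and "snd \<in> g \<rightarrow>\<^sub>M restrict_space borel S"
    using measurable_fst_SS measurable_snd_SS
    by (simp_all add: measurable_cong_sets[OF sets_coupling[OF g] refl])
  moreover have "fst -` B \<inter> space g = B \<times> S" and "snd -` B \<inter> space g = S \<times> B"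
    using sets.sets_into_space[OF B] by (auto simp: space_coupling[OF g])
  ultimately have "emeasure g (B \<times> S) = emeasure (hat_meas T s \<mu> \<nu>) B"
    and "emeasure g (S \<times> B) = emeasure (hat_meas T s \<nu> \<mu>) B"
    using g B by (auto simp: couplings_def emeasure_distr dest: sym)
  then show "emeasure g (B \<times> S) = emeasure \<mu> (B \<inter> T) + emeasure \<nu> T * indicator B s"
    and "emeasure g (S \<times> B) = emeasure \<nu> (B \<inter> T) + emeasure \<mu> T * indicator B s"
    using B by (simp_all add: emeasure_hat_meas sets_\<mu> sets_\<nu>)
qed

lemma finite_measure_coupling:
  assumes g: "g \<in> \<Gamma>"
  shows "finite_measure g"
proof (rule finite_measureI)
  have "emeasure g (S \<times> S) = emeasure \<mu> T + emeasure \<nu> T"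
    using emeasure_coupling_Times_S[OF g sets.top[of "restrict_space borel S", simplified]] s_notin_T
    by (simp add: Int_absorb1)
  then show "emeasure g (space g) \<noteq> \<infinity>"
    by (simp add: space_coupling[OF g])
qed

lemma emeasure_restrict_coupling:
  assumes g: "g \<in> \<Gamma>" and B: "B \<subseteq> T \<times> T"
  shows "emeasure (restrict_space g (T \<times> T)) B = emeasure g B"
proof (rule emeasure_restrict_space[OF _ B])
  have "T \<times> T \<inter> space g = T \<times> T"
    by (auto simp: space_coupling[OF g])
  then show "T \<times> T \<inter> space g \<in> sets g"
    using sets_restrict_SS_TT by (simp add: sets_coupling[OF g])
qed

lemma restrict_coupling_in_sub_plans:
  assumes g: "g \<in> \<Gamma>"
  shows "restrict_space g (T \<times> T) \<in> sub_plans T \<mu> \<nu>"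
proof -
  let ?\<gamma> = "restrict_space g (T \<times> T)"
  have TT: "T \<times> T \<in> sets g"
    using sets_restrict_SS_TT by (simp add: sets_coupling[OF g])
  have sets_\<gamma>: "sets ?\<gamma> = sets (restrict_space borel (T \<times> T))"
    using sets_restrict_space_cong[OF sets_coupling[OF g], of "T \<times> T"]
    by (simp add: restrict_restrict_SS_TT)
  have "emeasure (marg1 T ?\<gamma>) A \<le> emeasure \<mu> A" "emeasure (marg2 T ?\<gamma>) A \<le> emeasure \<nu> A"
    if A: "A \<in> sets (restrict_space borel T)" for A
  proof -
    have AS: "A \<in> sets (restrict_space borel S)" and "A \<subseteq> T"
      using A sets.sets_into_space[OF A] by (auto simp: sets_restrict_T_S)
    then have "A \<inter> T = A" "indicator A s = (0::ennreal)"
      using s_notin_T by (auto split: split_indicator)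
    moreover have "emeasure g (A \<times> T) \<le> emeasure g (A \<times> S)" "emeasure g (T \<times> A) \<le> emeasure g (S \<times> A)"
      using AS sets.top[of "restrict_space borel S"]
      by (auto intro!: emeasure_mono simp: sets_coupling[OF g] sets_restrict_S_Times)
    moreover have "emeasure ?\<gamma> (A \<times> T) = emeasure g (A \<times> T)" "emeasure ?\<gamma> (T \<times> A) = emeasure g (T \<times> A)"
      using \<open>A \<subseteq> T\<close> by (auto intro!: emeasure_restrict_coupling[OF g])
    ultimately show "emeasure (marg1 T ?\<gamma>) A \<le> emeasure \<mu> A" "emeasure (marg2 T ?\<gamma>) A \<le> emeasure \<nu> A"
      using emeasure_marg1[OF sets_\<gamma> A] emeasure_marg2[OF sets_\<gamma> A]
        emeasure_coupling_Times_S[OF g AS] emeasure_coupling_S_Times[OF g AS]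
      by auto
  qed
  moreover have "finite_measure ?\<gamma>"
    using finite_measure_coupling[OF g] TT by (rule finite_measure_restrict_space)
  ultimately show ?thesis
    using sets_\<gamma> by (simp add: sub_plans_def)
qed

lemma emeasure_split_SS:
  assumes sets_m: "sets m = sets (restrict_space borel (S \<times> S))"
    and A: "A \<in> sets (restrict_space borel (S \<times> S))"
  shows "emeasure m A = emeasure m (A \<inter> (T \<times> T)) + emeasure m ({x\<in>T. (x, s) \<in> A} \<times> {s})
    + emeasure m ({s} \<times> {y\<in>T. (s, y) \<in> A}) + emeasure m (A \<inter> {(s, s)})"
proof -
  define A\<^sub>1 where "A\<^sub>1 = {x\<in>T. (x, s) \<in> A}"
  define A\<^sub>2 where "A\<^sub>2 = {y\<in>T. (s, y) \<in> A}"
  have "A\<^sub>1 = (\<lambda>x. (x, s)) -` A \<inter> space (restrict_space borel T)"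
    and "A\<^sub>2 = (\<lambda>y. (s, y)) -` A \<inter> space (restrict_space borel T)"
    by (auto simp: A\<^sub>1_def A\<^sub>2_def)
  then have "A\<^sub>1 \<in> sets (restrict_space borel T)" and "A\<^sub>2 \<in> sets (restrict_space borel T)"
    using measurable_sets[OF measurable_Pair_s A] measurable_sets[OF measurable_s_Pair A] by simp_all
  then have sets_A: "A \<inter> (T \<times> T) \<in> sets m" "A\<^sub>1 \<times> {s} \<in> sets m" "{s} \<times> A\<^sub>2 \<in> sets m"
      "A \<inter> {(s, s)} \<in> sets m"
    using A sets_restrict_SS_TT sets_restrict_S_s sets_restrict_SS_ss
    by (auto simp: sets_m intro!: sets_restrict_S_Times sets_restrict_T_S)
  have "A = ((A \<inter> (T \<times> T) \<union> A\<^sub>1 \<times> {s}) \<union> {s} \<times> A\<^sub>2) \<union> A \<inter> {(s, s)}"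
    using sets.sets_into_space[OF A] by (auto simp: A\<^sub>1_def A\<^sub>2_def)
  also have "emeasure m \<dots> = emeasure m (A \<inter> (T \<times> T) \<union> A\<^sub>1 \<times> {s} \<union> {s} \<times> A\<^sub>2)
      + emeasure m (A \<inter> {(s, s)})"
    using sets_A s_notin_T by (intro plus_emeasure[symmetric]) (auto simp: A\<^sub>1_def A\<^sub>2_def)
  also have "emeasure m (A \<inter> (T \<times> T) \<union> A\<^sub>1 \<times> {s} \<union> {s} \<times> A\<^sub>2)
      = emeasure m (A \<inter> (T \<times> T) \<union> A\<^sub>1 \<times> {s}) + emeasure m ({s} \<times> A\<^sub>2)"
    using sets_A s_notin_T by (intro plus_emeasure[symmetric]) (auto simp: A\<^sub>1_def A\<^sub>2_def)
  also have "emeasure m (A \<inter> (T \<times> T) \<union> A\<^sub>1 \<times> {s})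
      = emeasure m (A \<inter> (T \<times> T)) + emeasure m (A\<^sub>1 \<times> {s})"
    using sets_A s_notin_T by (intro plus_emeasure[symmetric]) (auto simp: A\<^sub>1_def)
  finally show ?thesis
    by (simp add: A\<^sub>1_def A\<^sub>2_def)
qed

lemma
  assumes g: "g \<in> \<Gamma>"
  shows coupling_Times_T_add_Times_s: "B \<in> sets (restrict_space borel T) \<Longrightarrow>
      emeasure g (B \<times> T) + emeasure g (B \<times> {s}) = emeasure \<mu> B"
    and coupling_T_Times_add_s_Times: "B \<in> sets (restrict_space borel T) \<Longrightarrow>
      emeasure g (T \<times> B) + emeasure g ({s} \<times> B) = emeasure \<nu> B"
    and coupling_T_s_add_s_s: "emeasure g (T \<times> {s}) + emeasure g {(s, s)} = emeasure \<mu> T"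
proof -
  have disj: "B \<times> T \<inter> B' \<times> {s} = {}" "T \<times> B \<inter> {s} \<times> B' = {}" for B B'
    using s_notin_T by auto
  have union: "B \<times> T \<union> B \<times> {s} = B \<times> S" "T \<times> B \<union> {s} \<times> B = S \<times> B" for B
    by auto
  have times: "B \<times> C \<in> sets g" if "B \<in> sets (restrict_space borel S)" "C \<in> sets (restrict_space borel S)" for B C
    using that by (simp add: sets_coupling[OF g] sets_restrict_S_Times)
  show "emeasure g (B \<times> T) + emeasure g (B \<times> {s}) = emeasure \<mu> B"
    and "emeasure g (T \<times> B) + emeasure g ({s} \<times> B) = emeasure \<nu> B"
    if B: "B \<in> sets (restrict_space borel T)" for B
  proof -
    have BS: "B \<in> sets (restrict_space borel S)" and "B \<inter> T = B" "s \<notin> B"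
      using sets.sets_into_space[OF B] s_notin_T B by (auto simp: sets_restrict_T_S)
    then show "emeasure g (B \<times> T) + emeasure g (B \<times> {s}) = emeasure \<mu> B"
      and "emeasure g (T \<times> B) + emeasure g ({s} \<times> B) = emeasure \<nu> B"
      using emeasure_coupling_Times_S[OF g BS] emeasure_coupling_S_Times[OF g BS]
        times[OF BS sets_restrict_S_T] times[OF BS sets_restrict_S_s]
        times[OF sets_restrict_S_T BS] times[OF sets_restrict_S_s BS]
      by (simp_all add: plus_emeasure disj union)
  qed
  have "T \<times> {s} \<union> {(s, s)} = S \<times> {s}" and "T \<times> {s} \<inter> {(s, s)} = {}"
    using s_notin_T by auto
  then have "emeasure g (T \<times> {s}) + emeasure g {(s, s)} = emeasure g (S \<times> {s})"
    using times[OF sets_restrict_S_T sets_restrict_S_s] sets_restrict_SS_ss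
    by (simp add: plus_emeasure sets_coupling[OF g])
  then show "emeasure g (T \<times> {s}) + emeasure g {(s, s)} = emeasure \<mu> T"
    using emeasure_coupling_S_Times[OF g sets_restrict_S_s] s_notin_T by simp
qed

lemma coupling_eqI:
  assumes g: "g \<in> \<Gamma>"
    and g': "g' \<in> \<Gamma>"
    and eq: "restrict_space g (T \<times> T) = restrict_space g' (T \<times> T)"
  shows "g = g'"
proof (rule measure_eqI)
  show "sets g = sets g'"
    by (simp add: sets_coupling[OF g] sets_coupling[OF g'])
  have on_TT: "emeasure g B = emeasure g' B" if "B \<subseteq> T \<times> T" for B
    using emeasure_restrict_coupling[OF g that] emeasure_restrict_coupling[OF g' that] eq by simp
  have finite: "emeasure g B \<noteq> \<top>" for B
    using finite_measure.emeasure_finite[OF finite_measure_coupling[OF g]] by simp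
  have column: "emeasure g (B \<times> {s}) = emeasure g' (B \<times> {s})"
    and row: "emeasure g ({s} \<times> B) = emeasure g' ({s} \<times> B)"
    if B: "B \<in> sets (restrict_space borel T)" for B
  proof -
    have "B \<times> T \<subseteq> T \<times> T" "T \<times> B \<subseteq> T \<times> T"
      using sets.sets_into_space[OF B] by auto
    then have "emeasure g (B \<times> T) + emeasure g (B \<times> {s}) = emeasure g (B \<times> T) + emeasure g' (B \<times> {s})"
      and "emeasure g (T \<times> B) + emeasure g ({s} \<times> B) = emeasure g (T \<times> B) + emeasure g' ({s} \<times> B)"
      using coupling_Times_T_add_Times_s[OF g B] coupling_Times_T_add_Times_s[OF g' B]
        coupling_T_Times_add_s_Times[OF g B] coupling_T_Times_add_s_Times[OF g' B] on_TT
      by simp_all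
    then show "emeasure g (B \<times> {s}) = emeasure g' (B \<times> {s})"
      and "emeasure g ({s} \<times> B) = emeasure g' ({s} \<times> B)"
      using finite by (simp_all add: ennreal_add_left_cancel)
  qed
  have corner: "emeasure g {(s, s)} = emeasure g' {(s, s)}"
  proof -
    have "emeasure g (T \<times> {s}) + emeasure g {(s, s)} = emeasure g (T \<times> {s}) + emeasure g' {(s, s)}"
      using coupling_T_s_add_s_s[OF g] coupling_T_s_add_s_s[OF g'] column[OF sets.top] by simp
    then show ?thesis
      using finite by (simp add: ennreal_add_left_cancel)
  qed
  fix A assume "A \<in> sets g"
  then have A: "A \<in> sets (restrict_space borel (S \<times> S))"
    by (simp add: sets_coupling[OF g])
  have "emeasure g (A \<inter> {(s, s)}) = emeasure g' (A \<inter> {(s, s)})"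
    using corner by (cases "(s, s) \<in> A") (auto simp: Int_absorb1)
  moreover have "{x\<in>T. (x, s) \<in> A} \<in> sets (restrict_space borel T)"
    and "{y\<in>T. (s, y) \<in> A} \<in> sets (restrict_space borel T)"
    using measurable_sets[OF measurable_Pair_s A] measurable_sets[OF measurable_s_Pair A]
    by (simp_all add: vimage_def Int_def conj_commute)
  ultimately show "emeasure g A = emeasure g' A"
    using emeasure_split_SS[OF sets_coupling[OF g] A] emeasure_split_SS[OF sets_coupling[OF g'] A]
      on_TT[of "A \<inter> (T \<times> T)"] column row by simp
qed

lemma bij_betw_hat_plan:
  "bij_betw (hat_plan T s \<mu> \<nu>) (sub_plans T \<mu> \<nu>) (\<Gamma>)"
proof (rule bij_betwI')
  show "hat_plan T s \<mu> \<nu> \<gamma> = hat_plan T s \<mu> \<nu> \<gamma>' \<longleftrightarrow> \<gamma> = \<gamma>'"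
    if "\<gamma> \<in> sub_plans T \<mu> \<nu>" "\<gamma>' \<in> sub_plans T \<mu> \<nu>" for \<gamma> \<gamma>'
    using restrict_hat_plan[OF that(1)] restrict_hat_plan[OF that(2)] by metis
  show "hat_plan T s \<mu> \<nu> \<gamma> \<in> \<Gamma>"
    if "\<gamma> \<in> sub_plans T \<mu> \<nu>" for \<gamma>
    using that by (rule hat_plan_in_couplings)
  show "\<exists>\<gamma>\<in>sub_plans T \<mu> \<nu>. g = hat_plan T s \<mu> \<nu> \<gamma>"
    if g: "g \<in> \<Gamma>" for g
  proof
    let ?\<gamma> = "restrict_space g (T \<times> T)"
    show \<gamma>: "?\<gamma> \<in> sub_plans T \<mu> \<nu>"
      using g by (rule restrict_coupling_in_sub_plans)
    show "g = hat_plan T s \<mu> \<nu> ?\<gamma>"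
      using g hat_plan_in_couplings[OF \<gamma>] restrict_hat_plan[OF \<gamma>, symmetric] by (rule coupling_eqI)
  qed
qed

lemma borel_measurable_hat_c:
  assumes c: "continuous_on (T \<times> T) (\<lambda>z. c (fst z) (snd z))"
    and w1: "w1 \<in> borel_measurable (restrict_space borel T)"
    and w2: "w2 \<in> borel_measurable (restrict_space borel T)"
  shows "(\<lambda>z. hat_c b c lam w1 w2 s (fst z) (snd z)) \<in> borel_measurable (restrict_space borel (S \<times> S))"
proof -
  define w1' where "w1' = (\<lambda>x. if x \<in> T then w1 x else 0)"
  define w2' where "w2' = (\<lambda>x. if x \<in> T then w2 x else 0)"
  define c' where "c' = (\<lambda>z. if z \<in> T \<times> T then c (fst z) (snd z) else 0)"
  have [measurable]: "w1' \<in> borel_measurable borel" "w2' \<in> borel_measurable borel" "c' \<in> borel_measurable borel"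
    using w1 w2 borel_measurable_continuous_on_restrict[OF c]
    by (simp_all add: w1'_def w2'_def c'_def borel_measurable_extend_by_zero)
  have [measurable]: "fst \<in> borel_measurable (borel :: ('a \<times> 'a) measure)"
    "snd \<in> borel_measurable (borel :: ('a \<times> 'a) measure)"
    by (intro borel_measurable_continuous_onI continuous_intros)+
  have "(\<lambda>z. if fst z = s \<and> snd z = s then 0 else if snd z = s then w1' (fst z)
      else if fst z = s then w2' (snd z) else b * (c' z - lam)) \<in> borel_measurable borel"
    by measurable
  then have "(\<lambda>z. if fst z = s \<and> snd z = s then 0 else if snd z = s then w1' (fst z)
      else if fst z = s then w2' (snd z) else b * (c' z - lam)) \<in> borel_measurable (restrict_space borel (S \<times> S))"
    by (rule measurable_restrict_space1)
  moreover have "hat_c b c lam w1 w2 s (fst z) (snd z) = (if fst z = s \<and> snd z = s then 0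
      else if snd z = s then w1' (fst z) else if fst z = s then w2' (snd z) else b * (c' z - lam))"
    if "z \<in> space (restrict_space borel (S \<times> S))" for z
    using that s_notin_T by (auto simp: hat_c_def w1'_def w2'_def c'_def)
  ultimately show ?thesis
    by (rule measurable_cong[THEN iffD2, rotated])
qed

lemma KT_cost_hat_plan:
  assumes \<gamma>: "\<gamma> \<in> sub_plans T \<mu> \<nu>" and b: "b \<ge> 0"
    and c: "continuous_on (T \<times> T) (\<lambda>z. c (fst z) (snd z))"
    and w1_nonneg: "\<forall>x\<in>T. w1 x \<ge> 0" and w2_nonneg: "\<forall>x\<in>T. w2 x \<ge> 0"
    and w1: "w1 \<in> borel_measurable (restrict_space borel T)"
    and w2: "w2 \<in> borel_measurable (restrict_space borel T)"
  shows "KT_cost b c lam w1 w2 s (hat_plan T s \<mu> \<nu> \<gamma>) = ET_cost b c lam w1 w2 T \<mu> \<nu> \<gamma>"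
proof -
  let ?H = "hat_plan T s \<mu> \<nu> \<gamma>"
  let ?c = "\<lambda>z. hat_c b c lam w1 w2 s (fst z) (snd z)"
  define P where "P = (\<integral>\<^sup>+z. ennreal (c (fst z) (snd z) - lam) \<partial>\<gamma>)"
  define N where "N = (\<integral>\<^sup>+z. ennreal (- (c (fst z) (snd z) - lam)) \<partial>\<gamma>)"
  define W1 where "W1 = (\<integral>\<^sup>+x. ennreal (w1 x) * (1 - f\<^sub>1 \<gamma> x) \<partial>\<mu>)"
  define W2 where "W2 = (\<integral>\<^sup>+y. ennreal (w2 y) * (1 - f\<^sub>2 \<gamma> y) \<partial>\<nu>)"
  note [measurable] = borel_measurable_hat_c[OF c w1 w2]
  have c_meas [measurable]: "(\<lambda>z. c (fst z) (snd z)) \<in> borel_measurable \<gamma>"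
    using borel_measurable_continuous_on_restrict[OF c]
    by (simp add: measurable_cong_sets[OF sets_sub_plan[OF \<gamma>] refl])
  have c_TT: "?c z = b * (c (fst z) (snd z) - lam)" if "z \<in> T \<times> T" for z
    using that s_notin_T by (auto simp: hat_c_def)
  have c_Ts: "hat_c b c lam w1 w2 s x s = w1 x" and c_sT: "hat_c b c lam w1 w2 s s x = w2 x"
    if "x \<in> T" for x
    using that s_notin_T by (auto simp: hat_c_def)
  have c_ss: "hat_c b c lam w1 w2 s s s = 0"
    by (simp add: hat_c_def)
  have "(\<integral>\<^sup>+z. ennreal (?c z) \<partial>\<gamma>) = (\<integral>\<^sup>+z. ennreal b * ennreal (c (fst z) (snd z) - lam) \<partial>\<gamma>)"
    by (intro nn_integral_cong) (simp add: space_sub_plan[OF \<gamma>] c_TT ennreal_mult'[OF b])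
  moreover have "(\<integral>\<^sup>+x. (1 - f\<^sub>1 \<gamma> x) * ennreal (?c (x, s)) \<partial>\<mu>) = W1"
    unfolding W1_def by (intro nn_integral_cong) (simp add: c_Ts mult.commute)
  moreover have "(\<integral>\<^sup>+y. (1 - f\<^sub>2 \<gamma> y) * ennreal (?c (s, y)) \<partial>\<nu>) = W2"
    unfolding W2_def by (intro nn_integral_cong) (simp add: c_sT mult.commute)
  ultimately have positive_part: "(\<integral>\<^sup>+z. ennreal (?c z) \<partial>?H) = ennreal b * P + W1 + W2"
    by (simp add: nn_integral_hat_plan[OF \<gamma>] P_def nn_integral_cmult c_ss)
  have "(\<integral>\<^sup>+z. ennreal (- ?c z) \<partial>\<gamma>) = (\<integral>\<^sup>+z. ennreal b * ennreal (- (c (fst z) (snd z) - lam)) \<partial>\<gamma>)"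
    by (intro nn_integral_cong) (simp add: space_sub_plan[OF \<gamma>] c_TT ennreal_mult'[OF b, symmetric] algebra_simps)
  moreover have "(\<integral>\<^sup>+x. (1 - f\<^sub>1 \<gamma> x) * ennreal (- ?c (x, s)) \<partial>\<mu>) = (\<integral>\<^sup>+x. 0 \<partial>\<mu>)"
    using w1_nonneg by (intro nn_integral_cong) (simp add: c_Ts ennreal_neg)
  moreover have "(\<integral>\<^sup>+y. (1 - f\<^sub>2 \<gamma> y) * ennreal (- ?c (s, y)) \<partial>\<nu>) = (\<integral>\<^sup>+y. 0 \<partial>\<nu>)"
    using w2_nonneg by (intro nn_integral_cong) (simp add: c_sT ennreal_neg)
  ultimately have negative_part: "(\<integral>\<^sup>+z. ennreal (- ?c z) \<partial>?H) = ennreal b * N"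
    by (simp add: nn_integral_hat_plan[OF \<gamma>] N_def nn_integral_cmult c_ss)
  have "bounded ((\<lambda>z. c (fst z) (snd z)) ` (T \<times> T))"
    using compact_continuous_image[OF c compact_Times[OF compact_T compact_T]] by (rule compact_imp_bounded)
  then obtain B where B: "\<And>z. z \<in> T \<times> T \<Longrightarrow> \<bar>c (fst z) (snd z)\<bar> \<le> B"
    unfolding bounded_real by blast
  have bound: "c (fst z) (snd z) - lam \<le> B + \<bar>lam\<bar>" "- (c (fst z) (snd z) - lam) \<le> B + \<bar>lam\<bar>"
    if "z \<in> space \<gamma>" for z
    using B[of z] that by (auto simp: space_sub_plan[OF \<gamma>])
  have "P \<noteq> \<infinity>"
    unfolding P_def by (rule nn_integral_bounded_finite[OF finite_measure_sub_plan[OF \<gamma>] bound(1)])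
  moreover have "N \<noteq> \<infinity>"
    unfolding N_def by (rule nn_integral_bounded_finite[OF finite_measure_sub_plan[OF \<gamma>] bound(2)])
  ultimately show ?thesis
    unfolding KT_cost_def ET_cost_def ext_integral_def positive_part negative_part
    by (simp add: enn2ereal_add_diff_scaled b W1_def W2_def P_def N_def)
qed

end

theorem proposition3p3:
  fixes T :: "'a::{metric_space, second_countable_topology} set"
    and s :: 'a
    and c :: "'a \<Rightarrow> 'a \<Rightarrow> real"
    and w1 w2 :: "'a \<Rightarrow> real"
    and b lam :: real
    and \<mu> \<nu> :: "'a measure"
  assumes tree: "is_tree T"
    and s_notin: "s \<notin> T"
    and b_nonneg: "b \<ge> 0"
    and c_cont: "continuous_on (T \<times> T) (\<lambda>z. c (fst z) (snd z))"
    and c_diag: "\<forall>x\<in>T. c x x = 0"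
    and w1_nonneg: "\<forall>x\<in>T. w1 x \<ge> 0" and w2_nonneg: "\<forall>x\<in>T. w2 x \<ge> 0"
    and w1_meas: "w1 \<in> borel_measurable (restrict_space borel T)"
    and w2_meas: "w2 \<in> borel_measurable (restrict_space borel T)"
    and \<mu>: "\<mu> \<in> fin_measures T" and \<nu>: "\<nu> \<in> fin_measures T"
  shows "ET b c lam w1 w2 T \<mu> \<nu> = KT b c lam w1 w2 T s \<mu> \<nu>
    \<and> bij_betw (hat_plan T s \<mu> \<nu>) (ET_optimal b c lam w1 w2 T \<mu> \<nu>) (KT_optimal b c lam w1 w2 T s \<mu> \<nu>)"
proof -
  interpret one_point_extension T s \<mu> \<nu>
    using tree s_notin \<mu> \<nu> by unfold_locales (simp_all add: is_tree_def)
  have cost: "KT_cost b c lam w1 w2 s (hat_plan T s \<mu> \<nu> \<gamma>) = ET_cost b c lam w1 w2 T \<mu> \<nu> \<gamma>"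
    if "\<gamma> \<in> sub_plans T \<mu> \<nu>" for \<gamma>
    using that b_nonneg c_cont w1_nonneg w2_nonneg w1_meas w2_meas by (rule KT_cost_hat_plan)
  show ?thesis
    using bij_betw_INF_eq_and_minimizers[where f="ET_cost b c lam w1 w2 T \<mu> \<nu>"
        and g="KT_cost b c lam w1 w2 s", OF bij_betw_hat_plan cost]
    unfolding ET_def KT_def ET_optimal_def KT_optimal_def by simp
qed

end
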